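(* Let $G$ act on a simplicial tree $T$ and let $h\in G$ be hyperbolic. For $\lambda>0$ consider the conditions: $FS(\lambda)$: every element of $G$ fixing a subsegment of $A(h)$ of length greater than $\lambda\,tl(h)$ fixes $A(h)$ pointwise; $AI(\lambda)$: for every hyperbolic $g\in G$ with $tl(g)\le tl(h)$, either $|A(g)\cap A(h)|\le\lambda\,tl(h)$ or $g\in E(h)$; $WS(\lambda)$: $h$ is weakly $\lambda$-stable. Then $FS(\lambda)$ implies both $AI(\lambda+2)$ and $WS(\lambda+2)$, and $WS(\lambda)$ implies $FS(\lambda)$.
   Context: $tl(g)=\inf_p d(p,gp)$; $A(h)$ is the translation axis of hyperbolic $h$; $E(h)$ is the set of elements of $G$ preserving $A(h)$ setwise. $h$ is weakly $\lambda$-stable if for all $g\in G$, $|A(h)\cap gA(h)|>\lambda tl(h)$ implies $g\in E(h)$. *)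

theory Defs
  imports "HOL-Algebra.Group_Action" "HOL-Library.Extended_Real"
begin

text \<open>Simplicial trees: the vertex set is the whole type 'v, adjacency is a relation adj.\<close>

definition walk :: "('v \<Rightarrow> 'v \<Rightarrow> bool) \<Rightarrow> 'v list \<Rightarrow> bool" where
  "walk adj xs \<longleftrightarrow> xs \<noteq> [] \<and> (\<forall>i. Suc i < length xs \<longrightarrow> adj (xs ! i) (xs ! Suc i))"

definition simplicial_tree :: "('v \<Rightarrow> 'v \<Rightarrow> bool) \<Rightarrow> bool" where
  "simplicial_tree adj \<longleftrightarrow>
     (\<forall>u v. adj u v \<longrightarrow> adj v u) \<and> (\<forall>v. \<not> adj v v) \<and>
     (\<forall>u v. \<exists>xs. walk adj xs \<and> hd xs = u \<and> last xs = v) \<and>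
     (\<nexists>xs. walk adj xs \<and> distinct xs \<and> length xs \<ge> 3 \<and> adj (last xs) (hd xs))"

text \<open>Combinatorial (edge-path) distance; it agrees with the metric of the geometric realisation on vertices.\<close>
definition tdist :: "('v \<Rightarrow> 'v \<Rightarrow> bool) \<Rightarrow> 'v \<Rightarrow> 'v \<Rightarrow> nat" where
  "tdist adj u v = (LEAST n. \<exists>xs. walk adj xs \<and> hd xs = u \<and> last xs = v \<and> length xs = Suc n)"

text \<open>An automorphism is hyperbolic iff it fixes no point of the realisation:
  no fixed vertex and no inverted edge.\<close>
definition hyperbolic :: "('v \<Rightarrow> 'v \<Rightarrow> bool) \<Rightarrow> ('v \<Rightarrow> 'v) \<Rightarrow> bool" where
  "hyperbolic adj f \<longleftrightarrow> (\<forall>v. f v \<noteq> v) \<and> (\<nexists>u v. adj u v \<and> f u = v \<and> f v = u)"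

text \<open>Translation length (infimum over vertices; equals the infimum over the realisation
  for hyperbolic elements).\<close>
definition tl :: "('v \<Rightarrow> 'v \<Rightarrow> bool) \<Rightarrow> ('v \<Rightarrow> 'v) \<Rightarrow> nat" where
  "tl adj f = (LEAST n. \<exists>v. tdist adj v (f v) = n)"

definition axis :: "('v \<Rightarrow> 'v \<Rightarrow> bool) \<Rightarrow> ('v \<Rightarrow> 'v) \<Rightarrow> 'v set" where
  "axis adj f = {v. tdist adj v (f v) = tl adj f}"

definition seglen :: "'v set \<Rightarrow> ereal" where
  "seglen S = (if S = {} then 0 else if finite S then ereal (real (card S - 1)) else \<infinity>)"

definition segment :: "('v \<Rightarrow> 'v \<Rightarrow> bool) \<Rightarrow> 'v \<Rightarrow> 'v \<Rightarrow> 'v set" where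
  "segment adj p q = {x. tdist adj p x + tdist adj x q = tdist adj p q}"

definition Eh :: "('g, 'b) monoid_scheme \<Rightarrow> ('g \<Rightarrow> 'v \<Rightarrow> 'v) \<Rightarrow> ('v \<Rightarrow> 'v \<Rightarrow> bool) \<Rightarrow> 'g \<Rightarrow> 'g set" where
  "Eh G phi adj h = {g \<in> carrier G. phi g ` axis adj (phi h) = axis adj (phi h)}"

definition tree_action :: "('g, 'b) monoid_scheme \<Rightarrow> ('g \<Rightarrow> 'v \<Rightarrow> 'v) \<Rightarrow> ('v \<Rightarrow> 'v \<Rightarrow> bool) \<Rightarrow> bool" where
  "tree_action G phi adj \<longleftrightarrow> simplicial_tree adj \<and> group_action G UNIV phi \<and>
     (\<forall>g \<in> carrier G. \<forall>u v. adj (phi g u) (phi g v) \<longleftrightarrow> adj u v)"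

definition FS :: "('g, 'b) monoid_scheme \<Rightarrow> ('g \<Rightarrow> 'v \<Rightarrow> 'v) \<Rightarrow> ('v \<Rightarrow> 'v \<Rightarrow> bool) \<Rightarrow> 'g \<Rightarrow> real \<Rightarrow> bool" where
  "FS G phi adj h lam \<longleftrightarrow> (\<forall>g \<in> carrier G. \<forall>p q.
     p \<in> axis adj (phi h) \<longrightarrow> q \<in> axis adj (phi h) \<longrightarrow>
     real (tdist adj p q) > lam * real (tl adj (phi h)) \<longrightarrow>
     (\<forall>x \<in> segment adj p q. phi g x = x) \<longrightarrow> (\<forall>x \<in> axis adj (phi h). phi g x = x))"

definition AI :: "('g, 'b) monoid_scheme \<Rightarrow> ('g \<Rightarrow> 'v \<Rightarrow> 'v) \<Rightarrow> ('v \<Rightarrow> 'v \<Rightarrow> bool) \<Rightarrow> 'g \<Rightarrow> real \<Rightarrow> bool" where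
  "AI G phi adj h lam \<longleftrightarrow> (\<forall>g \<in> carrier G. hyperbolic adj (phi g) \<longrightarrow>
     tl adj (phi g) \<le> tl adj (phi h) \<longrightarrow>
     seglen (axis adj (phi g) \<inter> axis adj (phi h)) \<le> ereal (lam * real (tl adj (phi h)))
     \<or> g \<in> Eh G phi adj h)"

definition weakly_stable :: "('g, 'b) monoid_scheme \<Rightarrow> ('g \<Rightarrow> 'v \<Rightarrow> 'v) \<Rightarrow> ('v \<Rightarrow> 'v \<Rightarrow> bool) \<Rightarrow> 'g \<Rightarrow> real \<Rightarrow> bool" where
  "weakly_stable G phi adj h lam \<longleftrightarrow> (\<forall>g \<in> carrier G.
     seglen (axis adj (phi h) \<inter> phi g ` axis adj (phi h)) > ereal (lam * real (tl adj (phi h)))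
     \<longrightarrow> g \<in> Eh G phi adj h)"

end

theory Submission
  imports Defs
begin

text \<open>
  The axis of a hyperbolic automorphism \<open>h\<close> is a bi-infinite geodesic line on which \<open>h\<close>
  translates by \<open>tl(h)\<close>. If the axis of another hyperbolic \<open>g\<close> with \<open>tl(g) \<le> tl(h)\<close>, or the
  image \<open>k A(h)\<close> (the axis of \<open>k h k\<^sup>-\<^sup>1\<close>), shares a segment of length \<open>> (\<lambda> + 2) tl(h)\<close> with
  \<open>A(h)\<close>, then on a subsegment of length \<open>> \<lambda> tl(h)\<close> the elements \<open>g h\<close> and \<open>h g\<close> (resp. \<open>k h k\<^sup>-\<^sup>1\<close>
  and \<open>h\<^sup>\<plusminus>\<^sup>1\<close>) agree. By \<open>FS(\<lambda>)\<close> they then agree on all of \<open>A(h)\<close>, which forces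
  \<open>g A(h) \<subseteq> A(h)\<close> (resp. \<open>A(h) \<subseteq> k A(h)\<close>); since a geodesic line contained in another one
  is equal to it, \<open>g\<close> (resp. \<open>k\<close>) lies in \<open>E(h)\<close>. Conversely, under weak stability an element
  fixing a long segment of \<open>A(h)\<close> preserves \<open>A(h)\<close>, and an isometry of a line fixing two of its
  points fixes it pointwise.
\<close>

section \<open>Walks\<close>

lemma walk_Nil [simp]: "\<not> walk adj []"
  by (simp add: walk_def)

lemma walk_single [simp]: "walk adj [x]"
  by (simp add: walk_def)

lemma walk_Cons_iff: "walk adj (x # xs) \<longleftrightarrow> xs = [] \<or> walk adj xs \<and> adj x (hd xs)"
proof (cases xs)
  case (Cons y ys)
  have "(\<forall>i. Suc i < length (x # xs) \<longrightarrow> adj ((x # xs) ! i) ((x # xs) ! Suc i)) \<longleftrightarrow>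
        adj x y \<and> (\<forall>i. Suc i < length xs \<longrightarrow> adj (xs ! i) (xs ! Suc i))"
    using Cons by (auto simp: nth_Cons split: nat.splits)
  then show ?thesis
    using Cons by (auto simp: walk_def)
qed simp

lemma walk_append:
  "walk adj xs \<Longrightarrow> walk adj ys \<Longrightarrow> adj (last xs) (hd ys) \<Longrightarrow> walk adj (xs @ ys)"
proof (induction xs)
  case (Cons x xs)
  then show ?case
    by (cases "xs = []") (auto simp: walk_Cons_iff)
qed simp

lemma walk_rev: "(\<And>u v. adj u v \<Longrightarrow> adj v u) \<Longrightarrow> walk adj xs \<Longrightarrow> walk adj (rev xs)"
proof (induction xs)
  case (Cons x xs)
  then show ?case
    by (cases "xs = []") (auto simp: walk_Cons_iff last_rev intro: walk_append)
qed simp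

lemma walk_take: "walk adj xs \<Longrightarrow> 0 < n \<Longrightarrow> walk adj (take n xs)"
  by (auto simp: walk_def)

lemma walk_drop: "walk adj xs \<Longrightarrow> n < length xs \<Longrightarrow> walk adj (drop n xs)"
  by (auto simp: walk_def)

lemma walk_map: "(\<And>u v. adj u v \<Longrightarrow> adj (f u) (f v)) \<Longrightarrow> walk adj xs \<Longrightarrow> walk adj (map f xs)"
  by (auto simp: walk_def)

lemma first_common_element:
  assumes "set xs \<inter> set ys \<noteq> {}"
  obtains j k where "j < length xs" "k < length ys" "xs ! j = ys ! k"
    "set (take j xs) \<inter> set ys = {}"
proof -
  have ex: "\<exists>j. j < length xs \<and> xs ! j \<in> set ys"
    using assms by (auto simp: in_set_conv_nth)
  define j where "j = (LEAST j. j < length xs \<and> xs ! j \<in> set ys)"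
  have j: "j < length xs" "xs ! j \<in> set ys"
    using LeastI_ex[OF ex] unfolding j_def by auto
  have "xs ! i \<notin> set ys" if "i < j" for i
    using not_less_Least[of i "\<lambda>j. j < length xs \<and> xs ! j \<in> set ys"] j(1) that
    unfolding j_def by auto
  then have "set (take j xs) \<inter> set ys = {}"
    using j(1) by (auto simp: in_set_conv_nth[of _ "take j xs"])
  moreover obtain k where "k < length ys" "ys ! k = xs ! j"
    using j(2) by (auto simp: in_set_conv_nth)
  ultimately show thesis
    using that j(1) by simp
qed

section \<open>Distance in a simplicial tree\<close>

locale tree =
  fixes adj :: "'v \<Rightarrow> 'v \<Rightarrow> bool"
  assumes simplicial_tree: "simplicial_tree adj"
begin

abbreviation d :: "'v \<Rightarrow> 'v \<Rightarrow> nat" where "d \<equiv> tdist adj"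

lemma adj_sym: "adj u v \<Longrightarrow> adj v u"
  using simplicial_tree by (simp add: simplicial_tree_def)

lemma adj_irrefl: "\<not> adj v v"
  using simplicial_tree by (simp add: simplicial_tree_def)

lemma connected: "\<exists>xs. walk adj xs \<and> hd xs = u \<and> last xs = v"
  using simplicial_tree by (simp add: simplicial_tree_def)

lemma no_cycle: "walk adj xs \<Longrightarrow> distinct xs \<Longrightarrow> 3 \<le> length xs \<Longrightarrow> \<not> adj (last xs) (hd xs)"
  using simplicial_tree by (auto simp: simplicial_tree_def)

lemma tdist_le_walk: "walk adj xs \<Longrightarrow> d (hd xs) (last xs) \<le> length xs - 1"
  unfolding tdist_def by (rule Least_le) (use Suc_pred' in \<open>auto simp: walk_def\<close>)

definition geodesic :: "'v list \<Rightarrow> bool" where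
  "geodesic xs \<longleftrightarrow> walk adj xs \<and> length xs = Suc (d (hd xs) (last xs))"

lemma geodesic_exists:
  obtains xs where "geodesic xs" "hd xs = u" "last xs = v"
proof -
  obtain xs where xs: "walk adj xs" "hd xs = u" "last xs = v"
    using connected by blast
  then have "length xs = Suc (length xs - 1)"
    by (cases xs) auto
  with xs have "\<exists>n xs. walk adj xs \<and> hd xs = u \<and> last xs = v \<and> length xs = Suc n"
    by blast
  then have "\<exists>xs. walk adj xs \<and> hd xs = u \<and> last xs = v \<and> length xs = Suc (d u v)"
    unfolding tdist_def by (rule LeastI_ex)
  then show thesis
    using that unfolding geodesic_def by blast
qed

lemma tdist_refl [simp]: "d u u = 0"
  using tdist_le_walk[of "[u]"] by simp

lemma tdist_eq_0_iff [simp]: "d u v = 0 \<longleftrightarrow> u = v"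
proof
  assume "d u v = 0"
  obtain xs where "geodesic xs" "hd xs = u" "last xs = v"
    using geodesic_exists .
  with \<open>d u v = 0\<close> show "u = v"
    by (auto simp: geodesic_def length_Suc_conv)
qed simp

lemma tdist_sym: "d u v = d v u"
proof -
  have "d v u \<le> d u v" for u v
  proof -
    obtain xs where xs: "geodesic xs" "hd xs = u" "last xs = v"
      using geodesic_exists .
    then have "walk adj (rev xs)"
      using walk_rev adj_sym by (auto simp: geodesic_def)
    then show ?thesis
      using tdist_le_walk[of "rev xs"] xs by (simp add: geodesic_def hd_rev last_rev)
  qed
  then show ?thesis
    by (simp add: antisym)
qed

lemma tdist_triangle: "d u w \<le> d u v + d v w"
proof -
  obtain xs where xs: "geodesic xs" "hd xs = u" "last xs = v"
    using geodesic_exists .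
  obtain ys where ys: "geodesic ys" "hd ys = v" "last ys = w"
    using geodesic_exists .
  show ?thesis
  proof (cases "List.tl ys = []")
    case True
    with ys have "v = w"
      by (cases ys) (auto simp: geodesic_def)
    then show ?thesis by simp
  next
    case False
    with ys have "walk adj (List.tl ys)" "adj v (hd (List.tl ys))"
      by (cases ys; auto simp: geodesic_def walk_Cons_iff)+
    with xs have "walk adj (xs @ List.tl ys)"
      by (auto simp: geodesic_def intro: walk_append)
    then have "d (hd (xs @ List.tl ys)) (last (xs @ List.tl ys)) \<le> length (xs @ List.tl ys) - 1"
      by (rule tdist_le_walk)
    with xs ys False show ?thesis
      by (cases xs; cases ys) (auto simp: geodesic_def)
  qed
qed

lemma tdist_eq_1_iff: "d u v = 1 \<longleftrightarrow> adj u v"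
proof
  assume "d u v = 1"
  obtain xs where "geodesic xs" "hd xs = u" "last xs = v"
    using geodesic_exists .
  with \<open>d u v = 1\<close> show "adj u v"
    by (auto simp: geodesic_def length_Suc_conv walk_Cons_iff)
next
  assume "adj u v"
  then have "walk adj [u, v]"
    by (simp add: walk_Cons_iff)
  then have "d u v \<le> 1"
    using tdist_le_walk[of "[u, v]"] by simp
  moreover have "u \<noteq> v"
    using \<open>adj u v\<close> adj_irrefl by auto
  ultimately show "d u v = 1"
    by (cases "d u v") auto
qed

lemma geodesic_nth:
  assumes xs: "geodesic xs" and i: "i < length xs"
  shows "d (hd xs) (xs ! i) = i" "d (xs ! i) (last xs) = length xs - 1 - i"
proof -
  have "walk adj (take (Suc i) xs)" "walk adj (drop i xs)"
    using xs i by (auto simp: geodesic_def intro: walk_take walk_drop)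
  moreover have "hd (take (Suc i) xs) = hd xs" "hd (drop i xs) = xs ! i"
    "last (drop i xs) = last xs"
    using i by (simp_all add: hd_take hd_drop_conv_nth)
  moreover have "last (take (Suc i) xs) = xs ! i"
    using i by (simp add: take_Suc_conv_app_nth)
  ultimately have "d (hd xs) (xs ! i) \<le> i" "d (xs ! i) (last xs) \<le> length xs - 1 - i"
    using tdist_le_walk[of "take (Suc i) xs"] tdist_le_walk[of "drop i xs"] i by auto
  moreover have "d (hd xs) (last xs) \<le> d (hd xs) (xs ! i) + d (xs ! i) (last xs)"
    by (rule tdist_triangle)
  ultimately show "d (hd xs) (xs ! i) = i" "d (xs ! i) (last xs) = length xs - 1 - i"
    using xs i unfolding geodesic_def by linarith+
qed

lemma geodesic_distinct: "geodesic xs \<Longrightarrow> distinct xs"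
  unfolding distinct_conv_nth by (metis geodesic_nth(1))

lemma geodesic_closer:
  assumes "geodesic xs" "hd xs = u" "last xs = v" and "x \<in> set xs" "x \<noteq> u"
  shows "d x v < d u v"
proof -
  obtain i where i: "i < length xs" "x = xs ! i"
    using \<open>x \<in> set xs\<close> by (auto simp: in_set_conv_nth)
  moreover have "xs \<noteq> []"
    using \<open>x \<in> set xs\<close> by auto
  ultimately have "i \<noteq> 0"
    using assms(2,5) i(2) by (rule_tac notI, simp add: hd_conv_nth)
  with geodesic_nth[OF assms(1) i(1)] assms i show ?thesis
    by (auto simp: geodesic_def)
qed

lemma closed_walk_not_adj:
  assumes P: "walk adj P" "distinct P" and Q: "walk adj Q" "distinct Q"
    and jk: "j < length P" "k < length Q" "P ! j = Q ! k" "j \<noteq> 0" "k \<noteq> 0"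
    and before_j: "set (take j P) \<inter> set Q = {}"
  shows "\<not> adj (hd Q) (hd P)"
proof -
  define C where "C = take (Suc j) P @ rev (take k Q)"
  obtain i where "k = Suc i"
    using \<open>k \<noteq> 0\<close> not0_implies_Suc by blast
  then have "adj (Q ! (k - 1)) (Q ! k)"
    using Q(1) jk(2) by (simp add: walk_def)
  then have "adj (Q ! k) (Q ! (k - 1))"
    by (rule adj_sym)
  moreover have "last (take (Suc j) P) = P ! j" "hd (rev (take k Q)) = Q ! (k - 1)"
    using jk by (simp_all add: take_Suc_conv_app_nth hd_rev, subst last_conv_nth, auto)
  ultimately have "adj (last (take (Suc j) P)) (hd (rev (take k Q)))"
    using jk(3) by simp
  moreover have "walk adj (take (Suc j) P)" "walk adj (rev (take k Q))"
    using P(1) Q(1) \<open>k \<noteq> 0\<close> by (simp_all add: walk_take walk_rev[OF adj_sym])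
  ultimately have "walk adj C"
    unfolding C_def by (intro walk_append)
  moreover have "distinct C"
  proof -
    have "Q ! k \<notin> set (take k Q)"
      using Q(2) jk(2) id_take_nth_drop[of k Q]
      by (metis distinct_append distinct.simps(2) disjoint_iff list.set_intros(1))
    then have "set (take (Suc j) P) \<inter> set (take k Q) = {}"
      using before_j jk set_take_subset[of k Q] by (auto simp: take_Suc_conv_app_nth)
    then show ?thesis
      using P(2) Q(2) by (simp add: C_def)
  qed
  moreover have "3 \<le> length C"
    using jk by (simp add: C_def)
  ultimately have "\<not> adj (last C) (hd C)"
    by (rule no_cycle)
  moreover have "P \<noteq> []" "Q \<noteq> []"
    using jk(1,2) by auto
  then have "hd C = hd P" "last C = hd Q"
    using jk by (simp_all add: C_def last_rev hd_take)
  ultimately show ?thesis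
    by simp
qed

lemma edge_not_bypassed:
  assumes P: "walk adj P" "distinct P" and Q: "walk adj Q" "distinct Q"
    and "last P = last Q" and "adj (hd P) (hd Q)"
    and "hd Q \<notin> set P" and "hd P \<notin> set Q"
  shows False
proof -
  have "P \<noteq> []" "Q \<noteq> []"
    using P Q by auto
  with \<open>last P = last Q\<close> have "set P \<inter> set Q \<noteq> {}"
    using last_in_set by fastforce
  then obtain j k where jk: "j < length P" "k < length Q" "P ! j = Q ! k"
    and before_j: "set (take j P) \<inter> set Q = {}"
    by (rule first_common_element)
  have "P ! 0 \<notin> set Q" "Q ! 0 \<notin> set P"
    using assms \<open>P \<noteq> []\<close> \<open>Q \<noteq> []\<close> by (simp_all add: hd_conv_nth)
  moreover have "Q ! k \<in> set Q" "P ! j \<in> set P"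
    using jk(1,2) by simp_all
  ultimately have "j \<noteq> 0" "k \<noteq> 0"
    using jk(3) by (rule_tac notI, simp)+
  with P Q jk before_j have "\<not> adj (hd Q) (hd P)"
    by (intro closed_walk_not_adj)
  with adj_sym[OF \<open>adj (hd P) (hd Q)\<close>] show False
    by simp
qed

lemma tdist_adj_cases:
  assumes "adj u w"
  shows "d w v = Suc (d u v) \<or> d u v = Suc (d w v)"
proof -
  have "u \<noteq> w"
    using assms adj_irrefl by auto
  have "d w v \<noteq> d u v"
  proof
    assume eq: "d w v = d u v"
    obtain P where P: "geodesic P" "hd P = u" "last P = v"
      using geodesic_exists .
    obtain Q where Q: "geodesic Q" "hd Q = w" "last Q = v"
      using geodesic_exists .
    have "w \<notin> set P" "u \<notin> set Q"
      using geodesic_closer[OF P, of w] geodesic_closer[OF Q, of u] \<open>u \<noteq> w\<close> eq by auto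
    moreover have "walk adj P" "distinct P" "walk adj Q" "distinct Q"
      using P(1) Q(1) by (simp_all add: geodesic_def geodesic_distinct)
    ultimately show False
      using edge_not_bypassed[of P Q] P(2,3) Q(2,3) assms by simp
  qed
  moreover have "d w v \<le> d w u + d u v" "d u v \<le> d u w + d w v"
    by (rule tdist_triangle)+
  moreover have "d w u = 1" "d u w = 1"
    using assms adj_sym[OF assms] tdist_eq_1_iff by blast+
  ultimately show ?thesis
    by linarith
qed

lemma tdist_step:
  assumes "d u v = Suc n"
  obtains w where "adj u w" "d w v = n"
proof -
  obtain P where P: "geodesic P" "hd P = u" "last P = v"
    using geodesic_exists .
  then have "1 < length P"
    using assms by (simp add: geodesic_def)
  then have "adj (P ! 0) (P ! 1)" "d (P ! 1) v = n"
    using P geodesic_nth(2)[OF P(1), of 1] assms unfolding geodesic_def walk_def by auto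
  moreover have "P ! 0 = u"
    using P(2) \<open>1 < length P\<close> by (cases P) auto
  ultimately show thesis
    using that by simp
qed

lemma tdist_step_unique:
  assumes w1: "adj u w1" "d w1 v < d u v" and w2: "adj u w2" "d w2 v < d u v"
  shows "w1 = w2"
proof (rule ccontr)
  assume "w1 \<noteq> w2"
  have eq: "d w1 v = d w2 v" "d u v = Suc (d w1 v)"
    using tdist_adj_cases[OF w1(1), of v] tdist_adj_cases[OF w2(1), of v] w1 w2 by auto
  obtain P where P: "geodesic P" "hd P = w1" "last P = v"
    using geodesic_exists .
  obtain Q where Q: "geodesic Q" "hd Q = w2" "last Q = v"
    using geodesic_exists .
  have "u \<noteq> w1" "u \<noteq> w2"
    using w1 w2 adj_irrefl by auto
  then have "u \<notin> set P" "w2 \<notin> set P" "u \<notin> set Q"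
    using geodesic_closer[OF P, of u] geodesic_closer[OF P, of w2] geodesic_closer[OF Q, of u]
      eq \<open>w1 \<noteq> w2\<close> by auto
  moreover have "P \<noteq> []" "walk adj P" "distinct P" "walk adj Q" "distinct Q"
    using P(1) Q(1) by (auto simp: geodesic_def geodesic_distinct)
  moreover have "walk adj (u # P)"
    using \<open>walk adj P\<close> P(2) w1(1) by (simp add: walk_Cons_iff)
  ultimately show False
    using edge_not_bypassed[of "u # P" Q] P(2,3) Q(2,3) w2(1) \<open>u \<noteq> w2\<close> by simp
qed

lemma tdist_concat:
  assumes "d a b = m" and "d b c = n"
    and "\<And>w. adj b w \<Longrightarrow> d w a < m \<Longrightarrow> d w c < n \<Longrightarrow> False"
  shows "d a c = m + n"
  using assms
proof (induction n arbitrary: b m)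
  case (Suc n)
  obtain b' where b': "adj b b'" "d b' c = n"
    using tdist_step[OF Suc.prems(2)] .
  have "d b a = m"
    using Suc.prems(1) by (simp add: tdist_sym)
  then have "\<not> d b' a < m"
    using Suc.prems(3)[OF b'(1)] b'(2) by auto
  then have "d b' a = Suc m"
    using tdist_adj_cases[OF b'(1), of a] \<open>d b a = m\<close> by auto
  have "d a c = Suc m + n"
  proof (rule Suc.IH)
    show "d a b' = Suc m"
      using \<open>d b' a = Suc m\<close> by (simp add: tdist_sym)
    show "d b' c = n"
      by fact
    fix w
    assume w: "adj b' w" "d w a < Suc m" "d w c < n"
    have "w = b"
      using tdist_step_unique[of b' w a b] w(1,2) adj_sym[OF b'(1)] \<open>d b' a = Suc m\<close> \<open>d b a = m\<close>
      by simp
    then show False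
      using w(3) Suc.prems(2) by simp
  qed
  then show ?case
    by simp
qed simp

lemma segment_commute: "segment adj p q = segment adj q p"
  by (auto simp: segment_def tdist_sym add.commute)

lemma segment_step:
  assumes "y \<in> segment adj a b" and "d a y = Suc k"
  obtains w where "adj a w" "d w y = k" "y \<in> segment adj w b" "d w b < d a b"
proof -
  obtain w where w: "adj a w" "d w y = k"
    using tdist_step[OF assms(2)] .
  have "d w b \<le> d w y + d y b" "d a b \<le> d a w + d w b"
    by (rule tdist_triangle)+
  moreover have "d a w = 1"
    using w(1) tdist_eq_1_iff by blast
  ultimately have "d w y + d y b = d w b" "d w b < d a b"
    using assms w(2) by (auto simp: segment_def)
  with w that show thesis
    by (simp add: segment_def)
qed

lemma segment_unique:
  assumes "z \<in> segment adj a b" "z' \<in> segment adj a b" and "d a z = d a z'"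
  shows "z = z'"
  using assms
proof (induction "d a z" arbitrary: a)
  case (Suc k)
  obtain w where w: "adj a w" "d w z = k" "z \<in> segment adj w b" "d w b < d a b"
    using segment_step[OF Suc.prems(1) Suc.hyps(2)[symmetric]] .
  obtain w' where w': "adj a w'" "d w' z' = k" "z' \<in> segment adj w' b" "d w' b < d a b"
    using segment_step[OF Suc.prems(2)] Suc.hyps(2) Suc.prems(3) by metis
  have "w = w'"
    using tdist_step_unique w w' by blast
  then show ?case
    using Suc.hyps(1)[of w] w w' by simp
qed simp

lemma segment_point_exists:
  assumes "i \<le> d a b"
  obtains z where "z \<in> segment adj a b" "d a z = i"
  using assms
proof (induction i arbitrary: a thesis)
  case 0
  then show ?case
    by (simp add: segment_def)
next
  case (Suc i)
  obtain n where n: "d a b = Suc n"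
    using Suc_le_D[OF Suc.prems(2)] by blast
  obtain w where w: "adj a w" "d w b = n"
    using tdist_step[OF n] .
  obtain z where z: "z \<in> segment adj w b" "d w z = i"
    using Suc.IH[of w] Suc.prems(2) w n by auto
  have "d a z \<le> d a w + d w z" "d a b \<le> d a z + d z b"
    by (rule tdist_triangle)+
  moreover have "d a w = 1"
    using w(1) tdist_eq_1_iff by blast
  ultimately have "d a z = Suc i"
    using z n w(2) by (simp add: segment_def)
  with Suc.prems(1) show ?case
    using z n w(2) by (simp add: segment_def)
qed

lemma segment_adjacent:
  assumes z: "z \<in> segment adj a b" and z': "z' \<in> segment adj a b" and "d a z' = Suc (d a z)"
  shows "adj z z'"
proof -
  have "d z b = Suc (d z' b)"
    using assms by (simp add: segment_def)
  then obtain w where w: "adj z w" "d w b = d z' b"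
    using tdist_step by blast
  have "d a w \<le> d a z + d z w" "d a b \<le> d a w + d w b"
    by (rule tdist_triangle)+
  moreover have "d z w = 1"
    using w(1) tdist_eq_1_iff by blast
  ultimately have "d a w = d a z'" "w \<in> segment adj a b"
    using assms w(2) by (simp_all add: segment_def)
  then have "w = z'"
    using segment_unique z' by blast
  with w(1) show ?thesis
    by simp
qed

lemma segment_tdist:
  assumes z: "z \<in> segment adj a b" and z': "z' \<in> segment adj a b" and "d a z \<le> d a z'"
  shows "d z z' = d a z' - d a z"
  using assms
proof (induction "d a z' - d a z" arbitrary: z')
  case 0
  then have "z = z'"
    using segment_unique by simp
  then show ?case
    by simp
next
  case (Suc k)
  have "d a z' - 1 \<le> d a b"
    using Suc.prems(2) by (simp add: segment_def)
  then obtain y where y: "y \<in> segment adj a b" "d a y = d a z' - 1"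
    by (rule segment_point_exists)
  then have "adj y z'"
    using Suc.hyps(2) Suc.prems(2) by (intro segment_adjacent) auto
  then have "d y z' = 1"
    using tdist_eq_1_iff by blast
  moreover have "d z y = d a y - d a z"
    using Suc.hyps(1)[of y] Suc.hyps(2) Suc.prems(1) y by simp
  moreover have "d z z' \<le> d z y + d y z'" "d a z' \<le> d a z + d z z'"
    by (rule tdist_triangle)+
  ultimately show ?case
    using Suc.hyps(2) y(2) by linarith
qed

end

section \<open>Geodesic lines\<close>

lemma int_set_bounded_diameter:
  fixes K :: "int set"
  assumes "a \<in> K" and close: "\<And>m n. m \<in> K \<Longrightarrow> n \<in> K \<Longrightarrow> \<bar>m - n\<bar> \<le> N"
  shows "finite K" "card K \<le> nat (N + 1)"
proof -
  have "K \<subseteq> {a - N..a + N}"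
    by (auto dest: close[OF _ \<open>a \<in> K\<close>] simp: abs_le_iff)
  then show "finite K"
    using finite_subset by blast
  then have "Min K \<in> K"
    using \<open>a \<in> K\<close> by (intro Min_in) auto
  have "K \<subseteq> {Min K..Min K + N}"
  proof
    fix n
    assume "n \<in> K"
    with close[OF this \<open>Min K \<in> K\<close>] \<open>finite K\<close> show "n \<in> {Min K..Min K + N}"
      by simp
  qed
  then show "card K \<le> nat (N + 1)"
    using card_mono[of "{Min K..Min K + N}" K] by simp
qed

lemma int_isometry_affine:
  fixes \<sigma> :: "int \<Rightarrow> int"
  assumes "\<And>m n. \<bar>\<sigma> m - \<sigma> n\<bar> = \<bar>m - n\<bar>"
  obtains c e where "\<And>n. \<sigma> n = c + e * n" "e = 1 \<or> e = -1"
proof -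
  define e where "e = \<sigma> 1 - \<sigma> 0"
  have e: "e = 1 \<or> e = -1"
    using assms[of 1 0] by (auto simp: e_def)
  have unit_mult: "x = e * n" if "\<bar>x\<bar> = \<bar>n\<bar>" "\<bar>x - e\<bar> = \<bar>n - 1\<bar>" for x n :: int
    using that e by (elim disjE; simp; arith)
  have "\<sigma> n = \<sigma> 0 + e * n" for n
    using unit_mult[of "\<sigma> n - \<sigma> 0" n] assms[of n 0] assms[of n 1] by (simp add: e_def)
  with e show thesis
    using that by blast
qed

context tree
begin

definition line :: "(int \<Rightarrow> 'v) \<Rightarrow> bool" where
  "line l \<longleftrightarrow> (\<forall>m n. d (l m) (l n) = nat \<bar>m - n\<bar>)"

lemma line_tdist: "line l \<Longrightarrow> d (l m) (l n) = nat \<bar>m - n\<bar>"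
  by (simp add: line_def)

lemma line_eq_iff: "line l \<Longrightarrow> l m = l n \<longleftrightarrow> m = n"
  using line_tdist[of l m n] by auto

lemma tdist_nonbacktracking_walk:
  assumes step: "\<And>n. adj (l n) (l (n + 1))" and nonbacktracking: "\<And>n. l (n - 1) \<noteq> l (n + 1)"
  shows "d (l m) (l (m + int k)) = k"
proof (induction k rule: less_induct)
  case (less k)
  show ?case
  proof (cases k)
    case (Suc j)
    have "d (l m) (l (m + int j)) = j"
      using less Suc by simp
    moreover have "adj (l (m + int j)) (l (m + int k))"
      using step[of "m + int j"] Suc by (simp add: algebra_simps)
    then have "d (l (m + int j)) (l (m + int k)) = 1"
      using tdist_eq_1_iff by blast
    moreover have False
      if w: "adj (l (m + int j)) w" "d w (l m) < j" "d w (l (m + int k)) < 1" for w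
    proof -
      obtain i where j: "j = Suc i"
        using w(2) not0_implies_Suc by fastforce
      have "w = l (m + int j - 1)"
      proof (rule tdist_step_unique[OF w(1)])
        show "adj (l (m + int j)) (l (m + int j - 1))"
          using adj_sym[OF step[of "m + int j - 1"]] by simp
        show "d (l (m + int j - 1)) (l m) < d (l (m + int j)) (l m)"
          using less[of i] less[of j] Suc j by (simp add: tdist_sym)
        show "d w (l m) < d (l (m + int j)) (l m)"
          using w(2) \<open>d (l m) (l (m + int j)) = j\<close> by (simp add: tdist_sym)
      qed
      moreover have "w = l (m + int k)"
        using w(3) by simp
      moreover have "m + int k = m + int j + 1"
        using Suc by simp
      ultimately show False
        using nonbacktracking[of "m + int j"] by simp
    qed
    ultimately have "d (l m) (l (m + int k)) = j + 1"
      by (rule tdist_concat)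
    with Suc show ?thesis
      by simp
  qed simp
qed

lemma line_if_nonbacktracking:
  assumes step: "\<And>n. adj (l n) (l (n + 1))" and nonbacktracking: "\<And>n. l (n - 1) \<noteq> l (n + 1)"
  shows "line l"
  unfolding line_def
proof (intro allI)
  note dist = tdist_nonbacktracking_walk[OF step nonbacktracking]
  fix m n :: int
  show "d (l m) (l n) = nat \<bar>m - n\<bar>"
  proof (cases "m \<le> n")
    case True
    then have "d (l m) (l n) = nat (n - m)"
      using dist[of m "nat (n - m)"] by simp
    with True show ?thesis
      by simp
  next
    case False
    then have "d (l n) (l m) = nat (m - n)"
      using dist[of n "nat (m - n)"] by simp
    with False show ?thesis
      by (simp add: tdist_sym)
  qed
qed

lemma segment_line:
  assumes l: "line l" and "a \<le> b"
  shows "segment adj (l a) (l b) = l ` {a..b}"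
proof -
  have sub: "l ` {a..b} \<subseteq> segment adj (l a) (l b)"
    using line_tdist[OF l] by (auto simp: segment_def nat_add_distrib[symmetric])
  moreover have "segment adj (l a) (l b) \<subseteq> l ` {a..b}"
  proof
    fix x
    assume x: "x \<in> segment adj (l a) (l b)"
    define n where "n = a + int (d (l a) x)"
    have "d (l a) x \<le> nat (b - a)"
      using x line_tdist[OF l, of a b] \<open>a \<le> b\<close> by (simp add: segment_def)
    then have "n \<in> {a..b}"
      using \<open>a \<le> b\<close> by (auto simp: n_def le_nat_iff)
    then have "l n \<in> segment adj (l a) (l b)"
      using sub by blast
    moreover have "d (l a) (l n) = d (l a) x"
      using line_tdist[OF l] by (simp add: n_def)
    ultimately have "x = l n"
      using x segment_unique by blast
    with \<open>n \<in> {a..b}\<close> show "x \<in> l ` {a..b}"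
      by blast
  qed
  ultimately show ?thesis
    by blast
qed

lemma line_agrees_on_segment:
  assumes l: "line l" and l': "line l'" and s: "l a = l' s" and t: "l b = l' t" and "a \<le> b"
  obtains c e where "e = 1 \<or> e = -1" "\<And>n. a \<le> n \<Longrightarrow> n \<le> b \<Longrightarrow> l n = l' (c + e * n)"
proof -
  have "nat \<bar>s - t\<bar> = nat \<bar>a - b\<bar>"
    using line_tdist[OF l, of a b] line_tdist[OF l', of s t] s t by simp
  then have "\<bar>t - s\<bar> = b - a"
    using \<open>a \<le> b\<close> by simp
  then obtain e :: int where e: "e = 1 \<or> e = -1" and t_eq: "t = s + e * (b - a)"
    by (cases "s \<le> t") (auto intro: that)
  have "l n = l' (s - e * a + e * n)" if n: "a \<le> n" "n \<le> b" for n
  proof -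
    have "d (l' s) (l' (s - e * a + e * n)) = nat (n - a)"
      "d (l' (s - e * a + e * n)) (l' t) = nat (b - n)"
      using e n t_eq by (auto simp: line_tdist[OF l'])
    moreover have "d (l' s) (l' t) = nat (b - a)"
      using line_tdist[OF l', of s t] \<open>\<bar>t - s\<bar> = b - a\<close> by simp
    ultimately have "l' (s - e * a + e * n) \<in> segment adj (l a) (l b)"
      using s t n by (simp add: segment_def)
    moreover have "l n \<in> segment adj (l a) (l b)"
      using segment_line[OF l \<open>a \<le> b\<close>] n by simp
    moreover have "d (l a) (l n) = nat (n - a)"
      using line_tdist[OF l, of a n] n by simp
    ultimately show ?thesis
      using segment_unique \<open>d (l' s) (l' (s - e * a + e * n)) = nat (n - a)\<close> s by metis
  qed
  with e that show thesis
    by blast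
qed

lemma translation_on_overlap:
  assumes l: "line l" and l': "line l'" and f: "\<And>m. f (l' m) = l' (m + t)"
    and "l a \<in> range l'" "l b \<in> range l'" and "a \<le> b"
  obtains e where "e = 1 \<or> e = -1"
    "\<And>n. a \<le> n \<Longrightarrow> n \<le> b \<Longrightarrow> a \<le> n + e * t \<Longrightarrow> n + e * t \<le> b \<Longrightarrow> f (l n) = l (n + e * t)"
proof -
  obtain s s' where "l a = l' s" "l b = l' s'"
    using assms(4,5) by auto
  then obtain c e where e: "e = 1 \<or> e = -1"
    and agree: "\<And>n. a \<le> n \<Longrightarrow> n \<le> b \<Longrightarrow> l n = l' (c + e * n)"
    using line_agrees_on_segment[OF l l'] \<open>a \<le> b\<close> by metis
  have "f (l n) = l (n + e * t)"
    if "a \<le> n" "n \<le> b" "a \<le> n + e * t" "n + e * t \<le> b" for n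
  proof -
    have "c + e * (n + e * t) = c + e * n + t"
      using e by (auto simp: algebra_simps)
    then show ?thesis
      using agree[of n] agree[of "n + e * t"] f that by (simp add: add.assoc)
  qed
  with e that show thesis
    by blast
qed

lemma line_reparam:
  assumes l: "line l" and l': "line l'" and "range l \<subseteq> range l'"
  obtains c e where "\<And>n. l n = l' (c + e * n)" "e = 1 \<or> e = -1"
proof -
  have "\<forall>n. \<exists>m. l n = l' m"
    using assms(3) by blast
  then obtain \<sigma> where \<sigma>: "\<And>n. l n = l' (\<sigma> n)"
    by metis
  have "nat \<bar>\<sigma> m - \<sigma> n\<bar> = nat \<bar>m - n\<bar>" for m n
    using line_tdist[OF l, of m n] line_tdist[OF l', of "\<sigma> m" "\<sigma> n"] \<sigma> by simp
  then have "\<bar>\<sigma> m - \<sigma> n\<bar> = \<bar>m - n\<bar>" for m n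
    by (simp add: eq_nat_nat_iff)
  then obtain c e where "\<And>n. \<sigma> n = c + e * n" and e: "e = 1 \<or> e = -1"
    using int_isometry_affine by blast
  with \<sigma> show thesis
    by (intro that[OF _ e]) simp
qed

lemma line_range_eq:
  assumes l: "line l" and l': "line l'" and "range l \<subseteq> range l'"
  shows "range l = range l'"
proof -
  obtain c e where reparam: "\<And>n. l n = l' (c + e * n)" and e: "e = 1 \<or> e = -1"
    using line_reparam[OF assms] by blast
  have "l' m = l (e * (m - c))" for m
    using e reparam[of "e * (m - c)"] by (auto simp: algebra_simps)
  then show ?thesis
    using assms(3) by auto
qed

lemma line_map_fixes:
  assumes l: "line l" and fl: "line (\<lambda>n. f (l n))" and "range (\<lambda>n. f (l n)) \<subseteq> range l"
    and "f (l a) = l a" and "f (l b) = l b" and "a \<noteq> b"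
  shows "f (l n) = l n"
proof -
  obtain c e where ce: "\<And>n. f (l n) = l (c + e * n)" and e: "e = 1 \<or> e = -1"
    using line_reparam[OF fl l assms(3)] by blast
  have "c + e * a = a" "c + e * b = b"
    using assms(4,5) ce line_eq_iff[OF l] by metis+
  with e \<open>a \<noteq> b\<close> have "e = 1" "c = 0"
    by auto
  with ce show ?thesis
    by simp
qed

lemma line_projection_tdist:
  assumes l: "line l" and k: "\<And>n. d y (l k) \<le> d y (l n)"
  shows "d y (l n) = d y (l k) + nat \<bar>n - k\<bar>"
proof -
  define k' where "k' = (if k < n then k + 1 else k - 1)"
  have "d y (l n) = d y (l k) + d (l k) (l n)"
  proof (rule tdist_concat)
    fix w
    assume w: "adj (l k) w" "d w y < d y (l k)" "d w (l n) < d (l k) (l n)"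
    have "d (l k) (l k') = 1"
      using line_tdist[OF l, of k k'] by (simp add: k'_def)
    then have "adj (l k) (l k')"
      using tdist_eq_1_iff by blast
    moreover have "d (l k') (l n) < d (l k) (l n)"
      using w(3) line_tdist[OF l] by (auto simp: k'_def)
    ultimately have "w = l k'"
      using tdist_step_unique[OF w(1) w(3)] by blast
    then show False
      using w(2) k[of k'] by (simp add: tdist_sym)
  qed simp_all
  then show ?thesis
    using line_tdist[OF l, of k n] by (simp add: abs_minus_commute)
qed

lemma tdist_via_projections:
  assumes l: "line l" and k: "\<And>n. d y (l k) \<le> d y (l n)" and m: "\<And>n. d z (l m) \<le> d z (l n)"
    and "k \<noteq> m"
  shows "d y z = d y (l k) + nat \<bar>k - m\<bar> + d (l m) z"
proof (rule tdist_concat)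
  show "d y (l m) = d y (l k) + nat \<bar>k - m\<bar>"
    using line_projection_tdist[OF l k, of m] by (simp add: abs_minus_commute)
  fix w
  assume w: "adj (l m) w" "d w y < d y (l k) + nat \<bar>k - m\<bar>" "d w z < d (l m) z"
  define m' where "m' = (if m < k then m + 1 else m - 1)"
  have "d (l m) (l m') = 1"
    using line_tdist[OF l, of m m'] by (simp add: m'_def)
  then have "adj (l m) (l m')"
    using tdist_eq_1_iff by blast
  moreover have "d (l m') y < d (l m) y"
    using line_projection_tdist[OF l k, of m] line_projection_tdist[OF l k, of m'] \<open>k \<noteq> m\<close>
    by (auto simp: m'_def tdist_sym)
  moreover have "d w y < d (l m) y"
    using w(2) line_projection_tdist[OF l k, of m] by (simp add: tdist_sym abs_minus_commute)
  ultimately have "w = l m'"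
    using tdist_step_unique[OF w(1)] by blast
  then show False
    using w(3) m[of m'] by (simp add: tdist_sym)
qed simp

lemma seglen_ge_line_image:
  assumes l: "line l" and sub: "l ` {a..b} \<subseteq> S" and "a \<le> b"
  shows "ereal (real_of_int (b - a)) \<le> seglen S"
proof (cases "finite S")
  case True
  have "inj_on l {a..b}"
    using line_eq_iff[OF l] by (auto simp: inj_on_def)
  then have "nat (b - a + 1) \<le> card S"
    using card_mono[OF True sub] card_image by fastforce
  moreover have "S \<noteq> {}"
    using sub \<open>a \<le> b\<close> by auto
  ultimately show ?thesis
    using True \<open>a \<le> b\<close> by (simp add: seglen_def)
next
  case False
  then have "S \<noteq> {}"
    by auto
  with False show ?thesis
    by (simp add: seglen_def)
qed

lemma seglen_fixed_segment:
  assumes l: "line l" and fixed: "\<forall>x \<in> segment adj (l a) (l b). f x = x"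
  shows "ereal (real (d (l a) (l b))) \<le> seglen (range l \<inter> f ` range l)"
proof -
  have seg: "segment adj (l a) (l b) = l ` {min a b..max a b}"
  proof (cases "a \<le> b")
    case True
    then show ?thesis
      using segment_line[OF l True] by simp
  next
    case False
    then show ?thesis
      using segment_line[OF l, of b a] segment_commute[of "l a" "l b"] by simp
  qed
  have "l ` {min a b..max a b} \<subseteq> range l \<inter> f ` range l"
  proof
    fix x
    assume x: "x \<in> l ` {min a b..max a b}"
    then have "x = f x"
      using fixed seg by auto
    with x show "x \<in> range l \<inter> f ` range l"
      using image_eqI by blast
  qed
  then have "ereal (real_of_int (max a b - min a b)) \<le> seglen (range l \<inter> f ` range l)"
    by (rule seglen_ge_line_image[OF l]) simp
  moreover have "real (d (l a) (l b)) = real_of_int (max a b - min a b)"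
    using line_tdist[OF l, of a b] by (simp add: max_def min_def)
  ultimately show ?thesis
    by simp
qed

lemma seglen_gt_obtains:
  assumes l: "line l" and "S \<subseteq> range l" and long: "ereal X < seglen S" and "0 \<le> X"
  obtains a b where "a \<le> b" "l a \<in> S" "l b \<in> S" "X < real_of_int (b - a)"
proof (rule ccontr)
  assume "\<not> thesis"
  note pair = that
  define K where "K = l -` S"
  have S: "S = l ` K"
    using \<open>S \<subseteq> range l\<close> by (auto simp: K_def)
  have "S \<noteq> {}"
    using long \<open>0 \<le> X\<close> by (auto simp: seglen_def)
  then obtain a where "a \<in> K"
    using S by auto
  have close: "\<bar>m - n\<bar> \<le> \<lfloor>X\<rfloor>" if "m \<in> K" "n \<in> K" for m n
  proof -
    have "real_of_int \<bar>m - n\<bar> \<le> X"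
      using that pair[of m n] pair[of n m] \<open>\<not> thesis\<close>
      by (cases "n \<le> m") (auto simp: K_def not_less[symmetric])
    then show ?thesis
      by (simp add: le_floor_iff)
  qed
  have "finite K" "card K \<le> nat (\<lfloor>X\<rfloor> + 1)"
    using int_set_bounded_diameter[OF \<open>a \<in> K\<close> close] by blast+
  moreover have "card S = card K"
    using S line_eq_iff[OF l] by (auto simp: card_image inj_on_def)
  ultimately have "real (card S - 1) \<le> X"
    using \<open>0 \<le> X\<close> by linarith
  then show False
    using long \<open>S \<noteq> {}\<close> \<open>finite K\<close> S by (simp add: seglen_def)
qed

end

section \<open>Tree actions and axes of hyperbolic elements\<close>

lemma tl_le: "tl adj f \<le> tdist adj v (f v)"
  unfolding tl_def by (rule Least_le) blast

lemma tl_attained: "\<exists>v. tdist adj v (f v) = tl adj f"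
  unfolding tl_def by (rule LeastI_ex) blast

locale tree_act =
  fixes G :: "('g, 'b) monoid_scheme" and phi :: "'g \<Rightarrow> 'v \<Rightarrow> 'v"
    and adj :: "'v \<Rightarrow> 'v \<Rightarrow> bool"
  assumes tree_action: "tree_action G phi adj"
begin

sublocale tree adj
  using tree_action by unfold_locales (simp add: tree_action_def)

lemma group_action: "group_action G UNIV phi"
  using tree_action by (simp add: tree_action_def)

sublocale group G
  using group_action by (simp add: group_action_def group_hom_def)

lemma adj_action_iff: "g \<in> carrier G \<Longrightarrow> adj (phi g u) (phi g v) \<longleftrightarrow> adj u v"
  using tree_action by (simp add: tree_action_def)

lemma action_one: "phi \<one>\<^bsub>G\<^esub> x = x"
  using group_action.id_eq_one[OF group_action] by (metis restrict_apply UNIV_I)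

lemma action_mult: "g \<in> carrier G \<Longrightarrow> k \<in> carrier G \<Longrightarrow> phi (g \<otimes>\<^bsub>G\<^esub> k) x = phi g (phi k x)"
  using group_action.composition_rule[OF group_action] by simp

lemma action_l_inv: "g \<in> carrier G \<Longrightarrow> phi (inv\<^bsub>G\<^esub> g) (phi g x) = x"
  by (simp flip: action_mult add: action_one)

lemma action_r_inv: "g \<in> carrier G \<Longrightarrow> phi g (phi (inv\<^bsub>G\<^esub> g) x) = x"
  by (simp flip: action_mult add: action_one)

lemma tdist_action: "g \<in> carrier G \<Longrightarrow> d (phi g u) (phi g v) = d u v"
proof -
  have le: "d (phi g u) (phi g v) \<le> d u v" if g: "g \<in> carrier G" for g u v
  proof -
    obtain xs where xs: "geodesic xs" "hd xs = u" "last xs = v"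
      using geodesic_exists .
    then have "walk adj (map (phi g) xs)"
      using adj_action_iff[OF g] by (auto simp: geodesic_def intro: walk_map)
    then have "d (hd (map (phi g) xs)) (last (map (phi g) xs)) \<le> length xs - 1"
      using tdist_le_walk by fastforce
    with xs show ?thesis
      by (cases xs) (auto simp: geodesic_def last_map)
  qed
  assume g: "g \<in> carrier G"
  then have "d (phi (inv\<^bsub>G\<^esub> g) (phi g u)) (phi (inv\<^bsub>G\<^esub> g) (phi g v)) \<le> d (phi g u) (phi g v)"
    by (intro le) simp
  with le[OF g, of u v] show ?thesis
    using action_l_inv[OF g] by simp
qed

lemma action_eq_iff: "g \<in> carrier G \<Longrightarrow> phi g u = phi g v \<longleftrightarrow> u = v"
  using tdist_action[of g u v] by auto

lemma line_action: "g \<in> carrier G \<Longrightarrow> line l \<Longrightarrow> line (\<lambda>n. phi g (l n))"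
  by (simp add: line_def tdist_action)

lemma action_int_pow_Suc:
  fixes k :: int
  assumes "g \<in> carrier G"
  shows "phi (g [^]\<^bsub>G\<^esub> (k + 1)) x = phi g (phi (g [^]\<^bsub>G\<^esub> k) x)"
    and "phi (g [^]\<^bsub>G\<^esub> (k + 1)) x = phi (g [^]\<^bsub>G\<^esub> k) (phi g x)"
proof -
  have "g [^]\<^bsub>G\<^esub> (k + 1) = g \<otimes>\<^bsub>G\<^esub> g [^]\<^bsub>G\<^esub> k"
    using int_pow_mult[OF assms, of 1 k] assms by (simp add: add.commute)
  then show "phi (g [^]\<^bsub>G\<^esub> (k + 1)) x = phi g (phi (g [^]\<^bsub>G\<^esub> k) x)"
    using assms by (simp add: action_mult)
  have "g [^]\<^bsub>G\<^esub> (k + 1) = g [^]\<^bsub>G\<^esub> k \<otimes>\<^bsub>G\<^esub> g"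
    using int_pow_mult[OF assms, of k 1] assms by simp
  then show "phi (g [^]\<^bsub>G\<^esub> (k + 1)) x = phi (g [^]\<^bsub>G\<^esub> k) (phi g x)"
    using assms by (simp add: action_mult)
qed

lemma action_int_pow_translation:
  fixes k t :: int
  assumes g: "g \<in> carrier G" and shift: "\<And>n. phi g (l n) = l (n + t)"
  shows "phi (g [^]\<^bsub>G\<^esub> k) (l n) = l (n + k * t)"
proof -
  have "\<forall>n. phi (g [^]\<^bsub>G\<^esub> k) (l n) = l (n + k * t)"
  proof (induction k rule: int_induct[where k = 0])
    case base
    then show ?case
      by (simp add: action_one)
  next
    case (step1 i)
    then show ?case
      using action_int_pow_Suc(1)[OF g] shift by (simp add: ring_distribs add.assoc)
  next
    case (step2 i)
    have "phi (g [^]\<^bsub>G\<^esub> (i - 1)) (l n) = phi (g [^]\<^bsub>G\<^esub> i) (l (n - t))" for n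
      using action_int_pow_Suc(2)[OF g, of "i - 1" "l (n - t)"] shift[of "n - t"] by simp
    with step2 show ?case
      by (simp add: algebra_simps)
  qed
  then show ?thesis
    by blast
qed

end

locale hyperbolic_element = tree_act G phi adj
  for G :: "('g, 'b) monoid_scheme" and phi :: "'g \<Rightarrow> 'v \<Rightarrow> 'v" and adj +
  fixes g :: 'g
  assumes g_carrier: "g \<in> carrier G" and g_hyperbolic: "hyperbolic adj (phi g)"
begin

abbreviation \<tau> :: nat where "\<tau> \<equiv> tl adj (phi g)"

definition base_point :: 'v where
  "base_point = (SOME x. d x (phi g x) = \<tau>)"

definition base_path :: "nat \<Rightarrow> 'v" where
  "base_path i = (SOME z. z \<in> segment adj base_point (phi g base_point) \<and> d base_point z = i)"

text \<open>
  The geodesic from a point moved by exactly \<open>\<tau>\<close> to its image, together with all its translates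
  by powers of \<open>g\<close>, forms a non-backtracking bi-infinite walk, i.e. the axis.
\<close>

definition axis_line :: "int \<Rightarrow> 'v" where
  "axis_line n = phi (g [^]\<^bsub>G\<^esub> (n div int \<tau>)) (base_path (nat (n mod int \<tau>)))"

lemma tdist_base_point: "d base_point (phi g base_point) = \<tau>"
  unfolding base_point_def by (rule someI_ex) (rule tl_attained)

lemma tl_pos: "1 \<le> \<tau>"
proof (rule ccontr)
  assume "\<not> 1 \<le> \<tau>"
  then have "d base_point (phi g base_point) = 0"
    using tdist_base_point by linarith
  moreover have "phi g base_point \<noteq> base_point"
    using g_hyperbolic by (simp add: hyperbolic_def)
  ultimately show False
    by simp
qed

lemma base_path_spec:
  assumes "i \<le> \<tau>"
  shows "base_path i \<in> segment adj base_point (phi g base_point)" "d base_point (base_path i) = i"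
proof -
  have "\<exists>z. z \<in> segment adj base_point (phi g base_point) \<and> d base_point z = i"
    using segment_point_exists[of i base_point "phi g base_point"] assms tdist_base_point by metis
  then have "base_path i \<in> segment adj base_point (phi g base_point) \<and> d base_point (base_path i) = i"
    unfolding base_path_def by (rule someI_ex)
  then show "base_path i \<in> segment adj base_point (phi g base_point)" "d base_point (base_path i) = i"
    by simp_all
qed

lemma base_path_0: "base_path 0 = base_point"
  using base_path_spec(2)[of 0] by simp

lemma base_path_end: "base_path \<tau> = phi g base_point"
  using base_path_spec[of \<tau>] tdist_base_point by (simp add: segment_def)

lemma base_path_adj: "i < \<tau> \<Longrightarrow> adj (base_path i) (base_path (Suc i))"
  using base_path_spec[of i] base_path_spec[of "Suc i"] by (intro segment_adjacent) auto

lemma base_path_not_backtracking: "base_path (\<tau> - 1) \<noteq> phi g (base_path 1)"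
proof
  assume backtrack: "base_path (\<tau> - 1) = phi g (base_path 1)"
  show False
  proof (cases "\<tau> = 1")
    case True
    then have "adj base_point (phi g base_point)" "phi g (phi g base_point) = base_point"
      using backtrack tdist_base_point tdist_eq_1_iff base_path_0 base_path_end by auto
    with g_hyperbolic show False
      unfolding hyperbolic_def by blast
  next
    case False
    then have "d (base_path 1) (base_path (\<tau> - 1)) = \<tau> - 2"
      using base_path_spec[of 1] base_path_spec[of "\<tau> - 1"] tl_pos segment_tdist by simp
    moreover have "\<tau> \<le> d (base_path 1) (phi g (base_path 1))"
      by (rule tl_le)
    ultimately show False
      using backtrack False tl_pos by simp
  qed
qed

lemma tl_div_mod_cases:
  obtains k r where "n = k * int \<tau> + r" "0 \<le> r" "r < int \<tau>"
proof
  show "n = n div int \<tau> * int \<tau> + n mod int \<tau>" "0 \<le> n mod int \<tau>" "n mod int \<tau> < int \<tau>"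
    using tl_pos by simp_all
qed

lemma axis_line_eq:
  assumes "0 \<le> r" "r \<le> int \<tau>"
  shows "axis_line (k * int \<tau> + r) = phi (g [^]\<^bsub>G\<^esub> k) (base_path (nat r))"
proof (cases "r = int \<tau>")
  case True
  then have "k * int \<tau> + r = (k + 1) * int \<tau>"
    by (simp add: algebra_simps)
  then have "axis_line (k * int \<tau> + r) = phi (g [^]\<^bsub>G\<^esub> (k + 1)) (base_path 0)"
    using tl_pos by (simp add: axis_line_def)
  also have "\<dots> = phi (g [^]\<^bsub>G\<^esub> k) (base_path \<tau>)"
    using action_int_pow_Suc(2)[OF g_carrier] base_path_0 base_path_end by simp
  finally show ?thesis
    using True by simp
next
  case False
  with assms show ?thesis
    by (simp add: axis_line_def)
qed

lemma axis_line_shift: "axis_line (n + int \<tau>) = phi g (axis_line n)"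
proof -
  obtain k r where n: "n = k * int \<tau> + r" and r: "0 \<le> r" "r < int \<tau>"
    by (rule tl_div_mod_cases)
  then have "axis_line (n + int \<tau>) = phi (g [^]\<^bsub>G\<^esub> (k + 1)) (base_path (nat r))"
    using axis_line_eq[of r "k + 1"] by (simp add: algebra_simps)
  also have "\<dots> = phi g (axis_line n)"
    using action_int_pow_Suc(1)[OF g_carrier] axis_line_eq[of r k] n r by simp
  finally show ?thesis .
qed

lemma axis_line_adj: "adj (axis_line n) (axis_line (n + 1))"
proof -
  obtain k r where n: "n = k * int \<tau> + r" and r: "0 \<le> r" "r < int \<tau>"
    by (rule tl_div_mod_cases)
  have "axis_line n = phi (g [^]\<^bsub>G\<^esub> k) (base_path (nat r))"
    using axis_line_eq[of r k] n r by simp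
  moreover have "axis_line (n + 1) = phi (g [^]\<^bsub>G\<^esub> k) (base_path (nat (r + 1)))"
    using axis_line_eq[of "r + 1" k] n r by (simp add: add.assoc)
  moreover have "nat (r + 1) = Suc (nat r)"
    using r by simp
  moreover have "adj (base_path (nat r)) (base_path (Suc (nat r)))"
    using base_path_adj r by simp
  ultimately show ?thesis
    using adj_action_iff[OF int_pow_closed[OF g_carrier]] by simp
qed

lemma axis_line_nonbacktracking: "axis_line (n - 1) \<noteq> axis_line (n + 1)"
proof -
  obtain k r where n: "n = k * int \<tau> + r" and r: "0 \<le> r" "r < int \<tau>"
    by (rule tl_div_mod_cases)
  have succ: "axis_line (n + 1) = phi (g [^]\<^bsub>G\<^esub> k) (base_path (nat (r + 1)))"
    using axis_line_eq[of "r + 1" k] n r by (simp add: add.assoc)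
  show ?thesis
  proof (cases "r = 0")
    case False
    have pred: "n - 1 = k * int \<tau> + (r - 1)"
      using n by simp
    have "axis_line (n - 1) = phi (g [^]\<^bsub>G\<^esub> k) (base_path (nat (r - 1)))"
      unfolding pred using axis_line_eq[of "r - 1" k] r False by simp
    moreover have "d base_point (base_path (nat (r - 1))) = nat (r - 1)"
      "d base_point (base_path (nat (r + 1))) = nat (r + 1)"
      using base_path_spec(2) r by simp_all
    then have "base_path (nat (r - 1)) \<noteq> base_path (nat (r + 1))"
      using r by auto
    ultimately show ?thesis
      using succ action_eq_iff int_pow_closed[OF g_carrier] by simp
  next
    case True
    have pred: "n - 1 = (k - 1) * int \<tau> + (int \<tau> - 1)"
      using n True by (simp add: algebra_simps)
    have "axis_line (n - 1) = phi (g [^]\<^bsub>G\<^esub> (k - 1)) (base_path (nat (int \<tau> - 1)))"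
      unfolding pred using axis_line_eq[of "int \<tau> - 1" "k - 1"] tl_pos by simp
    moreover have "nat (int \<tau> - 1) = \<tau> - 1"
      by simp
    moreover have "axis_line (n + 1) = phi (g [^]\<^bsub>G\<^esub> (k - 1)) (phi g (base_path 1))"
      using succ True action_int_pow_Suc(2)[OF g_carrier, of "k - 1"] by simp
    ultimately show ?thesis
      using base_path_not_backtracking action_eq_iff int_pow_closed[OF g_carrier] by simp
  qed
qed

lemma line_axis_line: "line axis_line"
  using axis_line_adj axis_line_nonbacktracking by (rule line_if_nonbacktracking)

lemma axis_line_in_axis: "axis_line n \<in> axis adj (phi g)"
  using axis_line_shift[of n] line_tdist[OF line_axis_line, of n "n + int \<tau>"]
  by (simp add: axis_def)

lemma axis_subset_range_axis_line:
  assumes "y \<in> axis adj (phi g)"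
  shows "y \<in> range axis_line"
proof -
  obtain k where k: "\<And>n. d y (axis_line k) \<le> d y (axis_line n)"
    using ex_has_least_nat[of "\<lambda>_. True" 0 "\<lambda>n. d y (axis_line n)"] by blast
  have shifted: "d (phi g y) (axis_line (k + int \<tau>)) = d y (axis_line k)" for k
    using axis_line_shift[of k] tdist_action[OF g_carrier] by simp
  have "d (phi g y) (axis_line (k + int \<tau>)) \<le> d (phi g y) (axis_line n)" for n
    using k[of "n - int \<tau>"] shifted[of k] shifted[of "n - int \<tau>"] by simp
  then have "d y (phi g y) = d y (axis_line k) + \<tau> + d (axis_line (k + int \<tau>)) (phi g y)"
    using tdist_via_projections[OF line_axis_line k, of "phi g y" "k + int \<tau>"] tl_pos by simp
  also have "\<dots> = 2 * d y (axis_line k) + \<tau>"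
    using shifted[of k] tdist_sym[of "phi g y"] by simp
  finally have "d y (axis_line k) = 0"
    using assms by (simp add: axis_def)
  then show ?thesis
    by simp
qed

lemma range_axis_line: "range axis_line = axis adj (phi g)"
  using axis_line_in_axis axis_subset_range_axis_line by blast

end

section \<open>The stability conditions\<close>

context tree_act
begin

lemma hyperbolic_axis:
  assumes "h \<in> carrier G" and "hyperbolic adj (phi h)"
  shows "\<exists>l. line l \<and> range l = axis adj (phi h) \<and> (\<forall>n. phi h (l n) = l (n + int (tl adj (phi h))))"
proof -
  interpret hyperbolic_element G phi adj h
    by (intro hyperbolic_element.intro hyperbolic_element_axioms.intro tree_act_axioms assms)
  show ?thesis
    using line_axis_line range_axis_line axis_line_shift by (intro exI[of _ axis_line]) simp
qed

lemma mem_Eh_if_line_image: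
  assumes l: "line l" "range l = axis adj (phi h)" and k: "k \<in> carrier G"
    and "phi k ` range l \<subseteq> range l \<or> range l \<subseteq> phi k ` range l"
  shows "k \<in> Eh G phi adj h"
proof -
  have "range (\<lambda>n. phi k (l n)) = phi k ` range l"
    by auto
  moreover have "line (\<lambda>n. phi k (l n))"
    using line_action[OF k l(1)] .
  ultimately have "phi k ` range l = range l"
    using line_range_eq[OF l(1)] line_range_eq[of "\<lambda>n. phi k (l n)" l] l(1) assms(4) by metis
  with k l(2) show ?thesis
    by (simp add: Eh_def)
qed

lemma FS_agree_on_axis:
  assumes FS: "FS G phi adj h lam" and l: "line l" "range l = axis adj (phi h)"
    and u: "u \<in> carrier G" and v: "v \<in> carrier G" and "a \<le> b"
    and long: "lam * real (tl adj (phi h)) < real_of_int (b - a)"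
    and agree: "\<And>n. a \<le> n \<Longrightarrow> n \<le> b \<Longrightarrow> phi u (l n) = phi v (l n)"
  shows "phi u (l n) = phi v (l n)"
proof -
  define w where "w = inv\<^bsub>G\<^esub> u \<otimes>\<^bsub>G\<^esub> v"
  have w: "w \<in> carrier G"
    using u v by (simp add: w_def)
  have w_apply: "phi w x = phi (inv\<^bsub>G\<^esub> u) (phi v x)" for x
    using u v by (simp add: w_def action_mult)
  have "phi w x = x" if x: "x \<in> segment adj (l a) (l b)" for x
  proof -
    obtain m where "a \<le> m" "m \<le> b" "x = l m"
      using x segment_line[OF l(1) \<open>a \<le> b\<close>] by auto
    then show ?thesis
      using agree[symmetric] w_apply action_l_inv[OF u] by simp
  qed
  moreover have "l a \<in> axis adj (phi h)" "l b \<in> axis adj (phi h)"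
    using l(2) by auto
  moreover have "lam * real (tl adj (phi h)) < real (d (l a) (l b))"
    using long line_tdist[OF l(1), of a b] \<open>a \<le> b\<close> by simp
  ultimately have "phi w (l n) = l n"
    using FS w l(2) unfolding FS_def by blast
  then show ?thesis
    using w_apply action_r_inv[OF u] by metis
qed

lemma weakly_stable_imp_FS:
  assumes h: "h \<in> carrier G" "hyperbolic adj (phi h)" and "0 \<le> lam"
    and WS: "weakly_stable G phi adj h lam"
  shows "FS G phi adj h lam"
  unfolding FS_def
proof (intro ballI allI impI)
  fix k p q x
  assume k: "k \<in> carrier G" and "p \<in> axis adj (phi h)" "q \<in> axis adj (phi h)"
    and long: "lam * real (tl adj (phi h)) < real (d p q)"
    and fixed: "\<forall>x \<in> segment adj p q. phi k x = x" and "x \<in> axis adj (phi h)"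
  obtain l where l: "line l" "range l = axis adj (phi h)"
    using hyperbolic_axis[OF h] by blast
  obtain a b where p: "p = l a" and q: "q = l b"
    using \<open>p \<in> axis adj (phi h)\<close> \<open>q \<in> axis adj (phi h)\<close> l(2) by (metis rangeE)
  have "ereal (real (d p q)) \<le> seglen (axis adj (phi h) \<inter> phi k ` axis adj (phi h))"
    using seglen_fixed_segment[OF l(1), of a b "phi k"] fixed p q l(2) by simp
  with long have "ereal (lam * real (tl adj (phi h)))
      < seglen (axis adj (phi h) \<inter> phi k ` axis adj (phi h))"
    by (auto intro: less_le_trans[rotated])
  then have "k \<in> Eh G phi adj h"
    using WS k unfolding weakly_stable_def by blast
  then have "range (\<lambda>n. phi k (l n)) \<subseteq> range l"
    using l(2) by (auto simp: Eh_def)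
  moreover have "phi k (l a) = l a" "phi k (l b) = l b"
    using fixed p q by (simp_all add: segment_def)
  moreover have "a \<noteq> b"
  proof
    assume "a = b"
    moreover have "0 \<le> lam * real (tl adj (phi h))"
      using \<open>0 \<le> lam\<close> by simp
    ultimately show False
      using long p q by simp
  qed
  ultimately have "phi k (l n) = l n" for n
    by (rule line_map_fixes[OF l(1) line_action[OF k l(1)]])
  moreover obtain n where "x = l n"
    using \<open>x \<in> axis adj (phi h)\<close> l(2) by (metis rangeE)
  ultimately show "phi k x = x"
    by simp
qed

lemma FS_conjugate_translates:
  assumes FS: "FS G phi adj h lam" and "0 \<le> lam" and h: "h \<in> carrier G"
    and l: "line l" "range l = axis adj (phi h)"
    and shift: "\<forall>n. phi h (l n) = l (n + int (tl adj (phi h)))"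
    and k: "k \<in> carrier G" and "a \<le> b" and ab: "l a \<in> phi k ` range l" "l b \<in> phi k ` range l"
    and long: "(lam + 2) * real (tl adj (phi h)) < real_of_int (b - a)"
  shows "d (l n) (phi (k \<otimes>\<^bsub>G\<^esub> h \<otimes>\<^bsub>G\<^esub> inv\<^bsub>G\<^esub> k) (l n)) = tl adj (phi h)"
proof -
  let ?t = "int (tl adj (phi h))"
  define h' where "h' = k \<otimes>\<^bsub>G\<^esub> h \<otimes>\<^bsub>G\<^esub> inv\<^bsub>G\<^esub> k"
  have h': "h' \<in> carrier G"
    using h k by (simp add: h'_def)
  have "phi h' (phi k (l m)) = phi k (l (m + ?t))" for m
    using h k shift by (simp add: h'_def action_mult action_l_inv)
  moreover have "l a \<in> range (\<lambda>m. phi k (l m))" "l b \<in> range (\<lambda>m. phi k (l m))"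
    using ab by auto
  \<comment> \<open>\<open>e\<close> records whether \<open>A(h)\<close> and \<open>k A(h)\<close> run in the same direction along the overlap\<close>
  ultimately obtain e where e: "e = 1 \<or> e = -1" and translate:
    "\<And>n. a \<le> n \<Longrightarrow> n \<le> b \<Longrightarrow> a \<le> n + e * ?t \<Longrightarrow> n + e * ?t \<le> b \<Longrightarrow> phi h' (l n) = l (n + e * ?t)"
    using translation_on_overlap[OF l(1) line_action[OF k l(1)]] \<open>a \<le> b\<close> by metis
  have "phi h (l m) = l (m + ?t)" for m
    using shift by simp
  then have power: "phi (h [^]\<^bsub>G\<^esub> e) (l m) = l (m + e * ?t)" for m
    by (rule action_int_pow_translation[OF h])
  have "phi h' (l n) = phi (h [^]\<^bsub>G\<^esub> e) (l n)" for n
  proof (rule FS_agree_on_axis[OF FS l h' int_pow_closed[OF h]])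
    show "lam * real (tl adj (phi h)) < real_of_int (b - ?t - (a + ?t))"
      using long by (simp add: algebra_simps)
    moreover have "0 \<le> lam * real (tl adj (phi h))"
      using \<open>0 \<le> lam\<close> by simp
    ultimately show "a + ?t \<le> b - ?t"
      by linarith
    fix m
    assume "a + ?t \<le> m" "m \<le> b - ?t"
    with e show "phi h' (l m) = phi (h [^]\<^bsub>G\<^esub> e) (l m)"
      using translate[of m] power[of m] by auto
  qed
  then show ?thesis
    using power[of n] line_tdist[OF l(1)] e by (auto simp: h'_def)
qed

lemma FS_imp_weakly_stable:
  assumes h: "h \<in> carrier G" "hyperbolic adj (phi h)" and "0 \<le> lam"
    and FS: "FS G phi adj h lam"
  shows "weakly_stable G phi adj h (lam + 2)"
  unfolding weakly_stable_def
proof (intro ballI impI)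
  fix k
  assume k: "k \<in> carrier G"
    and long: "ereal ((lam + 2) * real (tl adj (phi h)))
      < seglen (axis adj (phi h) \<inter> phi k ` axis adj (phi h))"
  obtain l where l: "line l" "range l = axis adj (phi h)"
    and shift: "\<forall>n. phi h (l n) = l (n + int (tl adj (phi h)))"
    using hyperbolic_axis[OF h] by blast
  have "axis adj (phi h) \<inter> phi k ` axis adj (phi h) \<subseteq> range l"
    using l(2) by blast
  moreover have "0 \<le> (lam + 2) * real (tl adj (phi h))"
    using \<open>0 \<le> lam\<close> by simp
  ultimately obtain a b where "a \<le> b" and ab: "l a \<in> phi k ` range l" "l b \<in> phi k ` range l"
    and "(lam + 2) * real (tl adj (phi h)) < real_of_int (b - a)"
    using seglen_gt_obtains[OF l(1) _ long] l(2) by (metis IntD2)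
  then have conj: "d (l n) (phi (k \<otimes>\<^bsub>G\<^esub> h \<otimes>\<^bsub>G\<^esub> inv\<^bsub>G\<^esub> k) (l n)) = tl adj (phi h)" for n
    by (intro FS_conjugate_translates[OF FS \<open>0 \<le> lam\<close> h(1) l shift k])
  have "l n \<in> phi k ` range l" for n
  proof -
    let ?y = "phi (inv\<^bsub>G\<^esub> k) (l n)"
    have "d ?y (phi h ?y) = d (phi k ?y) (phi k (phi h ?y))"
      using tdist_action[OF k] by simp
    also have "\<dots> = d (l n) (phi (k \<otimes>\<^bsub>G\<^esub> h \<otimes>\<^bsub>G\<^esub> inv\<^bsub>G\<^esub> k) (l n))"
      using k h(1) by (simp add: action_mult action_r_inv)
    finally have "d ?y (phi h ?y) = tl adj (phi h)"
      using conj[of n] by simp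
    then have "phi (inv\<^bsub>G\<^esub> k) (l n) \<in> range l"
      using l(2) by (simp add: axis_def)
    then show ?thesis
      using action_r_inv[OF k] by (metis image_eqI)
  qed
  then have "range l \<subseteq> phi k ` range l"
    by blast
  then show "k \<in> Eh G phi adj h"
    using mem_Eh_if_line_image[OF l k] by blast
qed

lemma FS_commute_on_axis:
  assumes FS: "FS G phi adj h lam" and "0 \<le> lam" and h: "h \<in> carrier G"
    and l: "line l" "range l = axis adj (phi h)"
    and shift: "\<forall>n. phi h (l n) = l (n + int (tl adj (phi h)))"
    and k: "k \<in> carrier G" and lk: "line lk"
    and shift_k: "\<forall>n. phi k (lk n) = lk (n + int (tl adj (phi k)))"
    and "tl adj (phi k) \<le> tl adj (phi h)"
    and "a \<le> b" and ab: "l a \<in> range lk" "l b \<in> range lk"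
    and long: "(lam + 2) * real (tl adj (phi h)) < real_of_int (b - a)"
  shows "phi k (phi h (l n)) = phi h (phi k (l n))"
proof -
  let ?t = "int (tl adj (phi h))" and ?s = "int (tl adj (phi k))"
  obtain e where e: "e = 1 \<or> e = -1" and translate:
    "\<And>n. a \<le> n \<Longrightarrow> n \<le> b \<Longrightarrow> a \<le> n + e * ?s \<Longrightarrow> n + e * ?s \<le> b \<Longrightarrow> phi k (l n) = l (n + e * ?s)"
    using translation_on_overlap[OF l(1) lk] shift_k ab \<open>a \<le> b\<close> by metis
  \<comment> \<open>for \<open>m\<close> in \<open>[a', a' + (b - a - t - s)]\<close> the points \<open>m\<close>, \<open>m + t\<close>, \<open>m + e s\<close>, \<open>m + t + e s\<close> lie in \<open>[a, b]\<close>\<close>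
  define a' where "a' = (if e = 1 then a else a + ?s)"
  have shorter: "lam * real (tl adj (phi h)) < real_of_int (a' + (b - a - ?t - ?s) - a')"
    using long \<open>tl adj (phi k) \<le> tl adj (phi h)\<close> by (simp add: algebra_simps)
  have "phi (k \<otimes>\<^bsub>G\<^esub> h) (l n) = phi (h \<otimes>\<^bsub>G\<^esub> k) (l n)"
  proof (rule FS_agree_on_axis[OF FS l _ _ _ shorter])
    show "k \<otimes>\<^bsub>G\<^esub> h \<in> carrier G" "h \<otimes>\<^bsub>G\<^esub> k \<in> carrier G"
      using h k by simp_all
    have "0 \<le> lam * real (tl adj (phi h))"
      using \<open>0 \<le> lam\<close> by simp
    with shorter show "a' \<le> a' + (b - a - ?t - ?s)"
      by linarith
    fix m
    assume m: "a' \<le> m" "m \<le> a' + (b - a - ?t - ?s)"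
    have "phi k (l m) = l (m + e * ?s)" "phi k (l (m + ?t)) = l (m + ?t + e * ?s)"
      using e m translate[of m] translate[of "m + ?t"] by (auto simp: a'_def)
    then show "phi (k \<otimes>\<^bsub>G\<^esub> h) (l m) = phi (h \<otimes>\<^bsub>G\<^esub> k) (l m)"
      using h k shift by (simp add: action_mult algebra_simps)
  qed
  then show ?thesis
    using h k by (simp add: action_mult)
qed

lemma FS_overlapping_axes_imp_Eh:
  assumes h: "h \<in> carrier G" "hyperbolic adj (phi h)" and "0 \<le> lam"
    and FS: "FS G phi adj h lam"
    and k: "k \<in> carrier G" "hyperbolic adj (phi k)" and "tl adj (phi k) \<le> tl adj (phi h)"
    and long: "ereal ((lam + 2) * real (tl adj (phi h)))
      < seglen (axis adj (phi k) \<inter> axis adj (phi h))"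
  shows "k \<in> Eh G phi adj h"
proof -
  obtain l where l: "line l" "range l = axis adj (phi h)"
    and shift: "\<forall>n. phi h (l n) = l (n + int (tl adj (phi h)))"
    using hyperbolic_axis[OF h] by blast
  obtain lk where lk: "line lk" "range lk = axis adj (phi k)"
    and shift_k: "\<forall>n. phi k (lk n) = lk (n + int (tl adj (phi k)))"
    using hyperbolic_axis[OF k] by blast
  have "axis adj (phi k) \<inter> axis adj (phi h) \<subseteq> range l"
    using l(2) by blast
  moreover have "0 \<le> (lam + 2) * real (tl adj (phi h))"
    using \<open>0 \<le> lam\<close> by simp
  ultimately obtain a b where "a \<le> b" and ab: "l a \<in> range lk" "l b \<in> range lk"
    and "(lam + 2) * real (tl adj (phi h)) < real_of_int (b - a)"
    using seglen_gt_obtains[OF l(1) _ long] lk(2) by (metis IntD1)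
  then have commute: "phi k (phi h (l n)) = phi h (phi k (l n))" for n
    using FS_commute_on_axis[OF FS \<open>0 \<le> lam\<close> h(1) l shift k(1) lk(1) shift_k]
      \<open>tl adj (phi k) \<le> tl adj (phi h)\<close> by blast
  have "phi k (l n) \<in> range l" for n
  proof -
    have "d (phi k (l n)) (phi h (phi k (l n))) = d (l n) (phi h (l n))"
      using commute[of n, symmetric] tdist_action[OF k(1)] by simp
    then show ?thesis
      using l(2) line_tdist[OF l(1)] shift by (simp add: axis_def)
  qed
  then have "phi k ` range l \<subseteq> range l"
    by blast
  then show ?thesis
    using mem_Eh_if_line_image[OF l k(1)] by blast
qed

lemma FS_imp_AI:
  assumes h: "h \<in> carrier G" "hyperbolic adj (phi h)" and "0 \<le> lam"
    and FS: "FS G phi adj h lam"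
  shows "AI G phi adj h (lam + 2)"
  unfolding AI_def using FS_overlapping_axes_imp_Eh[OF h \<open>0 \<le> lam\<close> FS] by (meson not_le)

end

theorem mainTheorem12:
  fixes G :: "('g, 'b) monoid_scheme" and phi :: "'g \<Rightarrow> 'v \<Rightarrow> 'v"
    and adj :: "'v \<Rightarrow> 'v \<Rightarrow> bool" and h :: 'g and lam :: real
  assumes "tree_action G phi adj" and "h \<in> carrier G" and "hyperbolic adj (phi h)"
    and "lam > 0"
  shows "(FS G phi adj h lam \<longrightarrow> AI G phi adj h (lam + 2) \<and> weakly_stable G phi adj h (lam + 2))
       \<and> (weakly_stable G phi adj h lam \<longrightarrow> FS G phi adj h lam)"
proof -
  interpret tree_act G phi adj
    by (rule tree_act.intro) (rule assms(1))
  have "0 \<le> lam"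
    using assms(4) by simp
  then show ?thesis
    using FS_imp_AI FS_imp_weakly_stable weakly_stable_imp_FS assms(2,3) by blast
qed

end
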